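(* Let $\lambda,\nu$ be partitions and $k,\ell,m_1$ nonnegative integers with $\ell+m_1\le k$, and set $m_2=k-\ell-m_1$. Then the set of partitions $\mu$ such that $(\lambda,\mu,\nu)$ is an $sp$-bumping sequence with $|\lambda/\mu|=\ell$ and $|\nu/\mu|=k-\ell$ is in bijection with the set of pairs of partitions $(\mu^\circ,\mu^-)$ such that $(\lambda,\mu^\circ,\mu^-,\nu)$ is an $spo$-bumping sequence with $|\mu^\circ/\lambda|=m_1$, $|\mu^\circ/\mu^-|=\ell$ and $|\nu/\mu^-|=m_2$.
   Context: Partitions are identified with Young diagrams (English convention, rows numbered from the top, columns from the left); $\lambda_1$ is the length of the first row; $\mu\subseteq\lambda$ means $\mu_i\le\lambda_i$ for all $i$, $|\lambda/\mu|=|\lambda|-|\mu|$, and $\lambda/\mu$ is a horizontal strip if no two boxes of $\lambda/\mu$ lie in the same column. An $sp$-bumping sequence is a triple $(\lambda,\mu,\nu)$ of partitions with $\mu\subseteq\lambda$, $\mu\subseteq\nu$, and $\lambda/\mu$, $\nu/\mu$ horizontal strips. An $spo$-bumping sequence is a quadruple $(\lambda,\mu^\circ,\mu^-,\nu)$ of partitions with $\lambda\subseteq\mu^\circ$, $\mu^-\subseteq\mu^\circ$, $\mu^-\subseteq\nu$ such that: (1) $\mu^\circ/\lambda$, $\mu^\circ/\mu^-$ and $\nu/\mu^-$ are horizontal strips; (2) if $\lambda_1\neq\mu^\circ_1$ then $\mu^\circ_1=\mu^-_1$; (3) if $\nu/\mu^-$ and $\mu^\circ/\lambda$ are both nonempty,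 the leftmost box of $\nu/\mu^-$ lies in a column strictly to the right of the rightmost box of $\mu^\circ/\lambda$. *)

theory Defs
  imports Main
begin

text \<open>A partition is a weakly decreasing finite list of positive integers
  (its parts / row lengths, top row first). Rows are indexed from 0.\<close>

definition is_partition :: "nat list \<Rightarrow> bool" where
  "is_partition la \<longleftrightarrow> sorted_wrt (\<ge>) la \<and> (\<forall>x\<in>set la. 0 < x)"

definition part :: "nat list \<Rightarrow> nat \<Rightarrow> nat" where
  "part la i = (if i < length la then la ! i else 0)"

definition size_part :: "nat list \<Rightarrow> nat" where
  "size_part la = sum_list la"

definition contained :: "nat list \<Rightarrow> nat list \<Rightarrow> bool" where
  "contained mu la \<longleftrightarrow> (\<forall>i. part mu i \<le> part la i)"

text \<open>Boxes of the skew diagram la/mu: (row i, column j) with columns numbered from 1.\<close>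
definition skew_boxes :: "nat list \<Rightarrow> nat list \<Rightarrow> (nat \<times> nat) set" where
  "skew_boxes la mu = {(i, j). part mu i < j \<and> j \<le> part la i}"

definition skew_size :: "nat list \<Rightarrow> nat list \<Rightarrow> nat" where
  "skew_size la mu = size_part la - size_part mu"

definition horizontal_strip :: "nat list \<Rightarrow> nat list \<Rightarrow> bool" where
  "horizontal_strip la mu \<longleftrightarrow> contained mu la \<and>
     (\<forall>i j i' j'. (i, j) \<in> skew_boxes la mu \<and> (i', j') \<in> skew_boxes la mu \<and> j = j' \<longrightarrow> i = i')"

definition sp_bumping :: "nat list \<Rightarrow> nat list \<Rightarrow> nat list \<Rightarrow> bool" where
  "sp_bumping la mu nu \<longleftrightarrow> is_partition la \<and> is_partition mu \<and> is_partition nu \<and>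
     contained mu la \<and> contained mu nu \<and> horizontal_strip la mu \<and> horizontal_strip nu mu"

definition spo_bumping :: "nat list \<Rightarrow> nat list \<Rightarrow> nat list \<Rightarrow> nat list \<Rightarrow> bool" where
  "spo_bumping la muo mum nu \<longleftrightarrow>
     is_partition la \<and> is_partition muo \<and> is_partition mum \<and> is_partition nu \<and>
     contained la muo \<and> contained mum muo \<and> contained mum nu \<and>
     horizontal_strip muo la \<and> horizontal_strip muo mum \<and> horizontal_strip nu mum \<and>
     (part la 0 \<noteq> part muo 0 \<longrightarrow> part muo 0 = part mum 0) \<and>
     (skew_boxes nu mum \<noteq> {} \<and> skew_boxes muo la \<noteq> {} \<longrightarrow>
        (\<forall>b\<in>skew_boxes nu mum. \<forall>c\<in>skew_boxes muo la. snd c < snd b))"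

end

theory Submission
  imports Defs
begin

text \<open>An sp-bumping sequence \<open>(\<lambda>, \<mu>, \<nu>)\<close> is the same thing as an spo-bumping sequence
  \<open>(\<lambda>, \<lambda>, \<mu>, \<nu>)\<close>, i.e. one with \<open>m\<^sub>1 = 0\<close>. To raise \<open>m\<^sub>1\<close> by one, take the leftmost box of
  \<open>\<nu>/\<mu>\<^sup>-\<close>, say at the end of row \<open>r\<close>, move it into \<open>\<mu>\<^sup>-\<close>, and add a box to \<open>\<mu>\<^sup>\<circ>\<close> in row \<open>r\<close>
  (if rows \<open>r\<close> of \<open>\<mu>\<^sup>\<circ>\<close> and \<open>\<mu>\<^sup>-\<close> agree) or in row \<open>r + 1\<close>. Condition (3) guarantees that
  all boxes of \<open>\<mu>\<^sup>\<circ>/\<lambda>\<close> lie strictly left of that box, which keeps all strips horizontal and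
  condition (3) valid; the map is undone by removing the last box of the topmost row in which
  \<open>\<mu>\<^sup>\<circ>\<close> exceeds \<open>\<lambda>\<close>. Iterating this bijection \<open>m\<^sub>1\<close> times proves the theorem.\<close>

lemma sum_fun_upd_add:
  fixes f :: "'a \<Rightarrow> 'b::comm_monoid_add"
  assumes "finite A" "q \<in> A"
  shows "sum (f(q := v)) A + f q = sum f A + v"
proof -
  have "sum (f(q := v)) (A - {q}) = sum f (A - {q})"
    by (rule sum.cong) auto
  then have "sum (f(q := v)) A = v + sum f (A - {q})"
    using sum.remove[OF assms, of "f(q := v)"] by simp
  moreover have "sum f A = f q + sum f (A - {q})"
    using sum.remove[OF assms, of f] .
  ultimately show ?thesis by (simp add: ac_simps)
qed

definition hstrip :: "(nat \<Rightarrow> nat) \<Rightarrow> (nat \<Rightarrow> nat) \<Rightarrow> bool" where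
  "hstrip A B \<longleftrightarrow> (\<forall>i. B i \<le> A i \<and> A (Suc i) \<le> B i)"

lemma hstrip_le: "hstrip A B \<Longrightarrow> B i \<le> A i"
  and hstrip_Suc_le: "hstrip A B \<Longrightarrow> A (Suc i) \<le> B i"
  unfolding hstrip_def by auto

lemma hstrip_antimono_outer: "hstrip A B \<Longrightarrow> j \<le> i \<Longrightarrow> A i \<le> A j"
  unfolding hstrip_def by (rule lift_Suc_antimono_le[of A]) (auto intro: le_trans)

lemma hstrip_antimono_inner: "hstrip A B \<Longrightarrow> j \<le> i \<Longrightarrow> B i \<le> B j"
  unfolding hstrip_def by (rule lift_Suc_antimono_le[of B]) (auto intro: le_trans)

text \<open>Partitions are handled through their row-length functions: \<open>La\<close> and \<open>V\<close> are the rows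
  of \<open>\<lambda>\<close> and \<open>\<nu>\<close>, and in \<open>spo_rows\<close> the pair \<open>(X, Y)\<close> stands for \<open>(\<mu>\<^sup>\<circ>, \<mu>\<^sup>-)\<close>.
  All rows that occur vanish from index \<open>N\<close> on (those of \<open>\<lambda>\<close> from \<open>N - 1\<close> on, leaving room
  for \<open>\<mu>\<^sup>\<circ>\<close> to have one more row), so \<open>sz\<close>, which only sums the first \<open>N\<close> rows, is their size.\<close>

locale row_bumping =
  fixes La V :: "nat \<Rightarrow> nat" and N :: nat
  assumes La_antimono: "\<And>i. La (Suc i) \<le> La i"
    and La_zero: "\<And>i. N \<le> Suc i \<Longrightarrow> La i = 0"
    and V_zero: "\<And>i. N \<le> i \<Longrightarrow> V i = 0"
    and N_pos: "0 < N"
begin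

definition sz :: "(nat \<Rightarrow> nat) \<Rightarrow> nat" where
  "sz f = sum f {..<N}"

lemma sz_fun_upd_Suc: "q < N \<Longrightarrow> sz (f(q := Suc (f q))) = Suc (sz f)"
  unfolding sz_def using sum_fun_upd_add[of "{..<N}" q f "Suc (f q)"] by simp

lemma sz_fun_upd_pred: "q < N \<Longrightarrow> 0 < f q \<Longrightarrow> Suc (sz (f(q := f q - 1))) = sz f"
  unfolding sz_def using sum_fun_upd_add[of "{..<N}" q f "f q - 1"] by simp

lemma sz_mono: "(\<And>i. f i \<le> g i) \<Longrightarrow> sz f \<le> sz g"
  unfolding sz_def by (rule sum_mono)

definition sp_rows :: "nat \<Rightarrow> nat \<Rightarrow> (nat \<Rightarrow> nat) set" where
  "sp_rows l n = {Y. hstrip La Y \<and> hstrip V Y \<and> sz La = sz Y + l \<and> sz V = sz Y + n}"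

definition spo_rows :: "nat \<Rightarrow> nat \<Rightarrow> nat \<Rightarrow> ((nat \<Rightarrow> nat) \<times> (nat \<Rightarrow> nat)) set" where
  "spo_rows l m1 m2 = {(X, Y). hstrip X La \<and> hstrip X Y \<and> hstrip V Y \<and>
     (La 0 \<noteq> X 0 \<longrightarrow> X 0 = Y 0) \<and> (\<forall>a b. La a < X a \<and> Y b < V b \<longrightarrow> X a \<le> Y b) \<and>
     sz X = sz La + m1 \<and> sz X = sz Y + l \<and> sz V = sz Y + m2}"

lemma spo_rowsD:
  assumes "(X, Y) \<in> spo_rows l m1 m2"
  shows "hstrip X La" "hstrip X Y" "hstrip V Y" "La 0 \<noteq> X 0 \<Longrightarrow> X 0 = Y 0"
    "\<And>a b. La a < X a \<Longrightarrow> Y b < V b \<Longrightarrow> X a \<le> Y b"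
    "sz X = sz La + m1" "sz X = sz Y + l" "sz V = sz Y + m2"
  using assms unfolding spo_rows_def by auto

definition last_open_row :: "(nat \<Rightarrow> nat) \<Rightarrow> nat" where
  "last_open_row Y = (GREATEST j. Y j < V j)"

definition first_grown_row :: "(nat \<Rightarrow> nat) \<Rightarrow> nat" where
  "first_grown_row X = (LEAST i. La i < X i)"

text \<open>Row \<open>last_open_row Y\<close> ends in the leftmost box of \<open>\<nu>/\<mu>\<^sup>-\<close>, and
  \<open>first_grown_row X\<close> is the topmost row in which \<open>\<mu>\<^sup>\<circ>\<close> exceeds \<open>\<lambda>\<close>.\<close>

definition add_box :: "(nat \<Rightarrow> nat) \<times> (nat \<Rightarrow> nat) \<Rightarrow> (nat \<Rightarrow> nat) \<times> (nat \<Rightarrow> nat)" where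
  "add_box = (\<lambda>(X, Y). let r = last_open_row Y in
     (if X r = Y r then X(r := Suc (X r)) else X(Suc r := Suc (X (Suc r))), Y(r := Suc (Y r))))"

definition remove_box :: "(nat \<Rightarrow> nat) \<times> (nat \<Rightarrow> nat) \<Rightarrow> (nat \<Rightarrow> nat) \<times> (nat \<Rightarrow> nat)" where
  "remove_box = (\<lambda>(X, Y). let i = first_grown_row X in
     (X(i := X i - 1), if X i = Y i then Y(i := Y i - 1) else Y(i - 1 := Y (i - 1) - 1)))"

lemma last_open_row:
  assumes A: "(X, Y) \<in> spo_rows l m1 (Suc m2)"
  defines "r \<equiv> last_open_row Y"
  shows "Y r < V r" "r < N" "\<And>j. r < j \<Longrightarrow> Y j = V j" "\<And>j. j < r \<Longrightarrow> Y r < Y j"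
    "\<And>a. La a < X a \<Longrightarrow> X a \<le> Y r" "\<And>a. a < r \<Longrightarrow> X a = La a"
    "X r \<noteq> Y r \<Longrightarrow> X r = La r"
proof -
  note D = spo_rowsD[OF A]
  have bounded: "\<And>j. Y j < V j \<Longrightarrow> j < N"
    using V_zero by (metis not_less0 not_le)
  have "\<exists>j. Y j < V j"
  proof (rule ccontr)
    assume "\<nexists>j. Y j < V j"
    then have "sz V \<le> sz Y" by (intro sz_mono) (auto simp: not_less)
    with D(8) show False by simp
  qed
  then obtain j0 where "Y j0 < V j0" ..
  then show open_r: "Y r < V r"
    unfolding r_def last_open_row_def
    by (rule GreatestI_nat[of "\<lambda>j. Y j < V j" j0 N]) (auto dest: bounded)
  then show "r < N" by (rule bounded)
  show "\<And>j. r < j \<Longrightarrow> Y j = V j"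
  proof -
    fix j assume "r < j"
    then have "\<not> Y j < V j"
      unfolding r_def last_open_row_def using Greatest_le_nat[of "\<lambda>j. Y j < V j" j N]
        bounded by (meson less_imp_le not_le)
    then show "Y j = V j" using hstrip_le[OF D(3), of j] by simp
  qed
  show below_r: "\<And>j. j < r \<Longrightarrow> Y r < Y j"
  proof -
    fix j assume "j < r"
    then obtain i where i: "r = Suc i" "j \<le> i" by (metis less_imp_Suc_add le_add1)
    then show "Y r < Y j"
      using hstrip_Suc_le[OF D(3), of i] hstrip_antimono_inner[OF D(2) i(2)] open_r by simp
  qed
  show grown: "\<And>a. La a < X a \<Longrightarrow> X a \<le> Y r" using D(5) open_r by blast
  show "\<And>a. a < r \<Longrightarrow> X a = La a"
    using grown below_r hstrip_le[OF D(2)] hstrip_le[OF D(1)] by (meson le_neq_implies_less not_le order.trans)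
  show "X r \<noteq> Y r \<Longrightarrow> X r = La r"
    using grown[of r] hstrip_le[OF D(2), of r] hstrip_le[OF D(1), of r] by linarith
qed

lemma add_box_inner:
  assumes A: "(X, Y) \<in> spo_rows l m1 (Suc m2)"
  defines "r \<equiv> last_open_row Y"
  defines "Y' \<equiv> Y(r := Suc (Y r))"
  shows "hstrip V Y'" "sz Y' = Suc (sz Y)" "\<And>b. Y' b < V b \<Longrightarrow> Suc (Y r) \<le> Y' b"
proof -
  note D = spo_rowsD[OF A] and R = last_open_row[OF A, folded r_def]
  show "hstrip V Y'"
    using D(3) R(1) unfolding hstrip_def Y'_def by (auto simp: le_SucI Suc_le_eq)
  show "sz Y' = Suc (sz Y)" unfolding Y'_def using sz_fun_upd_Suc[OF R(2)] .
  show "\<And>b. Y' b < V b \<Longrightarrow> Suc (Y r) \<le> Y' b"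
    using R(3,4) unfolding Y'_def by (metis Suc_leI fun_upd_apply le_refl less_irrefl nat_neq_iff)
qed

lemma add_box_same_row:
  assumes A: "(X, Y) \<in> spo_rows l m1 (Suc m2)"
  defines "r \<equiv> last_open_row Y"
  assumes same: "X r = Y r"
  shows "(X(r := Suc (X r)), Y(r := Suc (Y r))) \<in> spo_rows l (Suc m1) m2"
proof -
  note D = spo_rowsD[OF A] and R = last_open_row[OF A, folded r_def]
    and I = add_box_inner[OF A, folded r_def]
  define X' where "X' = X(r := Suc (X r))"
  have above_r: "Suc (X r) \<le> La i \<and> Suc (X r) \<le> Y i" if "r = Suc i" for i
    using R(4,6)[of i] hstrip_le[OF D(2), of i] same that by simp
  have outer: "hstrip X' La" using D(1) above_r unfolding hstrip_def X'_def by (auto simp: le_SucI)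
  have middle: "hstrip X' (Y(r := Suc (Y r)))"
    using D(2) above_r same unfolding hstrip_def X'_def by (auto simp: le_SucI)
  have "X' a \<le> Suc (Y r)" if "La a < X' a" for a
    using R(5)[of a] same that unfolding X'_def by (cases "a = r") auto
  then have columns: "\<forall>a b. La a < X' a \<and> (Y(r := Suc (Y r))) b < V b \<longrightarrow> X' a \<le> (Y(r := Suc (Y r))) b"
    using I(3) order.trans by blast
  have "sz X' = Suc (sz X)" unfolding X'_def using sz_fun_upd_Suc[OF R(2)] .
  then show ?thesis
    using outer middle columns I(1,2) D(4,6-8) same unfolding spo_rows_def X'_def by auto
qed

lemma add_box_next_row:
  assumes A: "(X, Y) \<in> spo_rows l m1 (Suc m2)"
  defines "r \<equiv> last_open_row Y"
  assumes differ: "X r \<noteq> Y r"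
  shows "(X(Suc r := Suc (X (Suc r))), Y(r := Suc (Y r))) \<in> spo_rows l (Suc m1) m2"
proof -
  note D = spo_rowsD[OF A] and R = last_open_row[OF A, folded r_def]
    and I = add_box_inner[OF A, folded r_def]
  define X' where "X' = X(Suc r := Suc (X (Suc r)))"
  have XY: "Y r < X r" using differ hstrip_le[OF D(2), of r] by simp
  have La_r: "La r = X r" using R(7) differ by simp
  have next_r: "X (Suc r) \<le> Y r" using hstrip_Suc_le[OF D(2)] .
  have "Suc r < N" using La_zero[of r] La_r XY by (metis not_le not_less0)
  then have size: "sz X' = Suc (sz X)" unfolding X'_def by (rule sz_fun_upd_Suc)
  have outer: "hstrip X' La" using D(1) next_r XY La_r unfolding hstrip_def X'_def
    by (auto simp: le_SucI)
  have middle: "hstrip X' (Y(r := Suc (Y r)))" using D(2) next_r XY unfolding hstrip_def X'_def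
    by (auto simp: le_SucI)
  have "X' a \<le> Suc (Y r)" if "La a < X' a" for a
    using R(5)[of a] next_r that unfolding X'_def by (cases "a = Suc r") auto
  then have columns: "\<forall>a b. La a < X' a \<and> (Y(r := Suc (Y r))) b < V b \<longrightarrow> X' a \<le> (Y(r := Suc (Y r))) b"
    using I(3) order.trans by blast
  show ?thesis
    using size outer middle columns I(1,2) D(4,6-8) La_r unfolding spo_rows_def X'_def by auto
qed

lemma first_grown_row:
  assumes A: "(X, Y) \<in> spo_rows l (Suc m1) m2"
  defines "i \<equiv> first_grown_row X"
  shows "La i < X i" "i < N" "\<And>a. a < i \<Longrightarrow> X a = La a" "X (Suc i) \<le> La i"
    "\<And>b. Y b < V b \<Longrightarrow> X i \<le> Y b" "\<And>a. La a < X a \<Longrightarrow> a \<noteq> i \<Longrightarrow> X a < X i"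
    "X i \<noteq> Y i \<Longrightarrow> 0 < i"
proof -
  note D = spo_rowsD[OF A]
  have "\<exists>j. La j < X j"
  proof (rule ccontr)
    assume "\<nexists>j. La j < X j"
    then have "sz X \<le> sz La" by (intro sz_mono) (auto simp: not_less)
    with D(6) show False by simp
  qed
  then obtain j0 where "La j0 < X j0" ..
  then show grown_i: "La i < X i"
    unfolding i_def first_grown_row_def by (rule LeastI)
  have before_i: "\<not> La a < X a" if "a < i" for a
    using that not_less_Least unfolding i_def first_grown_row_def by blast
  then show "\<And>a. a < i \<Longrightarrow> X a = La a"
    using hstrip_le[OF D(1)] by (meson le_antisym not_less)
  show Suc_i: "X (Suc i) \<le> La i" using hstrip_Suc_le[OF D(1)] .
  show "\<And>b. Y b < V b \<Longrightarrow> X i \<le> Y b" using D(5) grown_i by blast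
  show "\<And>a. La a < X a \<Longrightarrow> a \<noteq> i \<Longrightarrow> X a < X i"
    using before_i hstrip_antimono_outer[OF D(1), of "Suc i"] Suc_i grown_i
    by (metis Suc_leI le_less_trans linorder_neqE_nat)
  show "X i \<noteq> Y i \<Longrightarrow> 0 < i" using D(4) grown_i by (metis gr0I less_irrefl)
  show "i < N"
  proof (rule ccontr)
    assume "\<not> i < N"
    then obtain p where "i = Suc p" "N \<le> Suc p" using N_pos by (cases i) auto
    then show False using grown_i hstrip_Suc_le[OF D(1), of p] La_zero[of p] by simp
  qed
qed

lemma remove_box_outer:
  assumes A: "(X, Y) \<in> spo_rows l (Suc m1) m2"
  defines "i \<equiv> first_grown_row X"
  defines "X' \<equiv> X(i := X i - 1)"
  shows "hstrip X' La" "Suc (sz X') = sz X" "\<And>a. La a < X' a \<Longrightarrow> X' a \<le> X i - 1"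
proof -
  note D = spo_rowsD[OF A] and F = first_grown_row[OF A, folded i_def]
  show "hstrip X' La" using D(1) F(1) unfolding hstrip_def X'_def
    by (auto simp: le_diff_conv2 intro: le_trans[OF diff_le_self])
  show "Suc (sz X') = sz X" unfolding X'_def using sz_fun_upd_pred[OF F(2)] F(1) by simp
  show "\<And>a. La a < X' a \<Longrightarrow> X' a \<le> X i - 1"
    using F(6) unfolding X'_def
    by (metis fun_upd_apply le_refl less_imp_le_nat less_Suc_eq_le Suc_pred' gr_zeroI not_less0)
qed

lemma remove_box_same_row:
  assumes A: "(X, Y) \<in> spo_rows l (Suc m1) m2"
  defines "i \<equiv> first_grown_row X"
  assumes same: "X i = Y i"
  shows "(X(i := X i - 1), Y(i := Y i - 1)) \<in> spo_rows l m1 (Suc m2)"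
proof -
  note D = spo_rowsD[OF A] and F = first_grown_row[OF A, folded i_def]
    and O = remove_box_outer[OF A, folded i_def]
  define Y' where "Y' = Y(i := Y i - 1)"
  have "V (Suc i) < X i"
  proof (rule ccontr)
    assume "\<not> V (Suc i) < X i"
    then have "Y (Suc i) < V (Suc i)"
      using hstrip_le[OF D(2), of "Suc i"] F(1,4) by simp
    then show False using F(5) hstrip_le[OF D(2), of "Suc i"] F(1,4) by fastforce
  qed
  then have inner: "hstrip V Y'"
    using D(3) same unfolding hstrip_def Y'_def by (auto intro: le_trans[OF diff_le_self])
  have middle: "hstrip (X(i := X i - 1)) Y'" unfolding hstrip_def
  proof (intro allI conjI)
    fix j
    show "Y' j \<le> (X(i := X i - 1)) j"
      using hstrip_le[OF D(2), of j] same unfolding Y'_def by auto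
    show "(X(i := X i - 1)) (Suc j) \<le> Y' j"
      using hstrip_Suc_le[OF D(2), of j] hstrip_le[OF D(2), of "Suc j"] F(1,4) same
      unfolding Y'_def by auto
  qed
  have "X i - 1 \<le> Y' b" if "Y' b < V b" for b
    using F(5)[of b] hstrip_antimono_inner[OF D(2), of b i] same that unfolding Y'_def
    by (cases b i rule: linorder_cases) auto
  then have columns:
    "\<forall>a b. La a < (X(i := X i - 1)) a \<and> Y' b < V b \<longrightarrow> (X(i := X i - 1)) a \<le> Y' b"
    using O(3) order.trans by blast
  have size: "Suc (sz Y') = sz Y" unfolding Y'_def using sz_fun_upd_pred[OF F(2)] F(1) same by simp
  have "La 0 \<noteq> (X(i := X i - 1)) 0 \<longrightarrow> (X(i := X i - 1)) 0 = Y' 0"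
    using F(3)[of 0] same unfolding Y'_def by (cases i) auto
  then show ?thesis
    using inner middle columns size O(1,2) D(6-8) unfolding spo_rows_def Y'_def by auto
qed

lemma remove_box_prev_row:
  assumes A: "(X, Y) \<in> spo_rows l (Suc m1) m2"
  defines "i \<equiv> first_grown_row X"
  assumes differ: "X i \<noteq> Y i"
  shows "(X(i := X i - 1), Y(i - 1 := Y (i - 1) - 1)) \<in> spo_rows l m1 (Suc m2)"
proof -
  note D = spo_rowsD[OF A] and F = first_grown_row[OF A, folded i_def]
    and O = remove_box_outer[OF A, folded i_def]
  obtain p where p: "i = Suc p" using F(7) differ gr0_implies_Suc by blast
  define Y' where "Y' = Y(p := Y p - 1)"
  have YX: "Y i < X i" using differ hstrip_le[OF D(2), of i] by simp
  have XY_p: "X i \<le> Y p" using hstrip_Suc_le[OF D(2), of p] p by simp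
  have "V i < Y p"
  proof (rule ccontr)
    assume "\<not> V i < Y p"
    then have "Y i < V i" using hstrip_Suc_le[OF D(3), of p] p YX XY_p by simp
    then show False using F(5) YX by fastforce
  qed
  then have inner: "hstrip V Y'"
    using D(3) p unfolding hstrip_def Y'_def by (auto intro: le_trans[OF diff_le_self])
  have middle: "hstrip (X(i := X i - 1)) Y'" unfolding hstrip_def
  proof (intro allI conjI)
    fix j
    show "Y' j \<le> (X(i := X i - 1)) j"
      using hstrip_le[OF D(2), of j] YX unfolding Y'_def by auto
    show "(X(i := X i - 1)) (Suc j) \<le> Y' j"
      using hstrip_Suc_le[OF D(2), of j] XY_p p unfolding Y'_def by auto
  qed
  have "X i - 1 \<le> Y' b" if "Y' b < V b" for b
    using F(5)[of b] hstrip_antimono_inner[OF D(2), of b p] XY_p that unfolding Y'_def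
    by (cases b p rule: linorder_cases) auto
  then have columns:
    "\<forall>a b. La a < (X(i := X i - 1)) a \<and> Y' b < V b \<longrightarrow> (X(i := X i - 1)) a \<le> Y' b"
    using O(3) order.trans by blast
  have size: "Suc (sz Y') = sz Y"
    unfolding Y'_def using sz_fun_upd_pred[of p Y] F(1,2) XY_p p by simp
  have "La 0 \<noteq> (X(i := X i - 1)) 0 \<longrightarrow> (X(i := X i - 1)) 0 = Y' 0"
    using F(3)[of 0] p by simp
  then show ?thesis
    using inner middle columns size O(1,2) D(6-8) p unfolding spo_rows_def Y'_def by auto
qed

lemma first_grown_row_eqI:
  "La i < X i \<Longrightarrow> (\<And>a. a < i \<Longrightarrow> X a \<le> La a) \<Longrightarrow> first_grown_row X = i"
  unfolding first_grown_row_def by (rule Least_equality) (auto simp: not_less[symmetric])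

lemma last_open_row_eqI:
  "Y j < V j \<Longrightarrow> (\<And>b. j < b \<Longrightarrow> V b \<le> Y b) \<Longrightarrow> last_open_row Y = j"
  unfolding last_open_row_def by (rule Greatest_equality) (auto simp: not_less[symmetric])

lemma remove_add_box:
  assumes A: "(X, Y) \<in> spo_rows l m1 (Suc m2)"
  shows "remove_box (add_box (X, Y)) = (X, Y)"
proof -
  note D = spo_rowsD[OF A] and R = last_open_row[OF A]
  define r where "r = last_open_row Y"
  show ?thesis
  proof (cases "X r = Y r")
    case True
    have "first_grown_row (X(r := Suc (X r))) = r"
      using hstrip_le[OF D(1), of r] R(6) unfolding r_def by (intro first_grown_row_eqI) auto
    with True show ?thesis unfolding add_box_def remove_box_def r_def
      by (simp add: Let_def fun_upd_idem_iff)
  next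
    case False
    have "first_grown_row (X(Suc r := Suc (X (Suc r)))) = Suc r"
      using hstrip_le[OF D(1), of "Suc r"] R(6,7) False unfolding r_def
      by (intro first_grown_row_eqI) (auto simp: less_Suc_eq)
    moreover have "Suc (X (Suc r)) \<noteq> Y (Suc r)"
      using hstrip_le[OF D(2), of "Suc r"] by simp
    ultimately show ?thesis using False unfolding add_box_def remove_box_def r_def by (simp add: Let_def)
  qed
qed

lemma add_remove_box:
  assumes A: "(X, Y) \<in> spo_rows l (Suc m1) m2"
  shows "add_box (remove_box (X, Y)) = (X, Y)"
proof -
  note D = spo_rowsD[OF A] and F = first_grown_row[OF A]
  define i where "i = first_grown_row X"
  have closed_after_i: "V b \<le> Y b" if "Y b < X i" for b
    using F(5)[of b] that unfolding i_def by fastforce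
  show ?thesis
  proof (cases "X i = Y i")
    case True
    have "last_open_row (Y(i := Y i - 1)) = i"
    proof (rule last_open_row_eqI)
      show "(Y(i := Y i - 1)) i < V i" using hstrip_le[OF D(3), of i] F(1) True unfolding i_def by simp
      show "V b \<le> (Y(i := Y i - 1)) b" if "i < b" for b
        using closed_after_i[of b] hstrip_le[OF D(2), of b] hstrip_antimono_outer[OF D(2), of "Suc i" b]
          F(1,4) True that unfolding i_def by simp
    qed
    with True F(1) show ?thesis unfolding add_box_def remove_box_def i_def
      by (simp add: Let_def fun_upd_idem_iff)
  next
    case False
    obtain p where p: "i = Suc p" using F(7) False unfolding i_def using gr0_implies_Suc by blast
    have XY_p: "X i \<le> Y p" using hstrip_Suc_le[OF D(2), of p] p by simp
    have "last_open_row (Y(p := Y p - 1)) = p"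
    proof (rule last_open_row_eqI)
      show "(Y(p := Y p - 1)) p < V p" using hstrip_le[OF D(3), of p] F(1) XY_p unfolding i_def by simp
      show "V b \<le> (Y(p := Y p - 1)) b" if "p < b" for b
        using closed_after_i[of b] hstrip_antimono_inner[OF D(2), of i b] hstrip_le[OF D(2), of i]
          False p that by simp
    qed
    moreover have "X p \<noteq> Y p - 1"
      using hstrip_le[OF D(2), of p] XY_p F(1) unfolding i_def by simp
    ultimately show ?thesis using False F(1) XY_p p unfolding add_box_def remove_box_def i_def
      by (simp add: Let_def)
  qed
qed

lemma add_box_in_spo_rows:
  "p \<in> spo_rows l m1 (Suc m2) \<Longrightarrow> add_box p \<in> spo_rows l (Suc m1) m2"
  using add_box_same_row add_box_next_row by (cases p) (auto simp: add_box_def Let_def)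

lemma remove_box_in_spo_rows:
  "p \<in> spo_rows l (Suc m1) m2 \<Longrightarrow> remove_box p \<in> spo_rows l m1 (Suc m2)"
  using remove_box_same_row remove_box_prev_row by (cases p) (auto simp: remove_box_def Let_def)

lemma bij_betw_add_box: "bij_betw add_box (spo_rows l m1 (Suc m2)) (spo_rows l (Suc m1) m2)"
  by (rule bij_betw_byWitness[where f' = remove_box])
    (auto simp: remove_add_box add_remove_box add_box_in_spo_rows remove_box_in_spo_rows)

lemma spo_rows_0_fst:
  assumes A: "(X, Y) \<in> spo_rows l 0 m2"
  shows "X = La"
proof
  fix i
  note D = spo_rowsD[OF A]
  show "X i = La i"
  proof (cases "i < N")
    case True
    then show ?thesis
      using sum_mono_inv[of La "{..<N}" X i] hstrip_le[OF D(1)] D(6) unfolding sz_def by auto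
  next
    case False
    then obtain j where "i = Suc j" "N \<le> Suc j" using N_pos by (cases i) auto
    then show ?thesis using hstrip_Suc_le[OF D(1), of j] La_zero[of j] La_zero[of i] by simp
  qed
qed

lemma bij_betw_sp_rows_spo_rows_0: "bij_betw (\<lambda>Y. (La, Y)) (sp_rows l n) (spo_rows l 0 n)"
proof (rule bij_betw_byWitness[where f' = snd])
  have "hstrip La La" unfolding hstrip_def using La_antimono by auto
  then show "(\<lambda>Y. (La, Y)) ` sp_rows l n \<subseteq> spo_rows l 0 n"
    unfolding sp_rows_def spo_rows_def by auto
  show "\<forall>p\<in>spo_rows l 0 n. (La, snd p) = p"
    using spo_rows_0_fst by (metis prod.collapse)
  then show "snd ` spo_rows l 0 n \<subseteq> sp_rows l n"
    unfolding sp_rows_def spo_rows_def by auto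
qed simp

lemma sp_rows_bij_spo_rows: "\<exists>f. bij_betw f (sp_rows l (m1 + m2)) (spo_rows l m1 m2)"
proof (induction m1 arbitrary: m2)
  case 0
  show ?case using bij_betw_sp_rows_spo_rows_0 by auto
next
  case (Suc m1)
  then obtain f where "bij_betw f (sp_rows l (m1 + Suc m2)) (spo_rows l m1 (Suc m2))" by blast
  then have "bij_betw (add_box \<circ> f) (sp_rows l (Suc m1 + m2)) (spo_rows l (Suc m1) m2)"
    using bij_betw_add_box by (auto intro: bij_betw_trans)
  then show ?case by blast
qed

end


lemma hstrip_zero_inner: "hstrip A B \<Longrightarrow> (\<And>i. M \<le> i \<Longrightarrow> A i = 0) \<Longrightarrow> M \<le> i \<Longrightarrow> B i = 0"
  using hstrip_le by (metis le_zero_eq)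

lemma hstrip_zero_outer:
  "hstrip A B \<Longrightarrow> (\<And>i. M \<le> i \<Longrightarrow> B i = 0) \<Longrightarrow> Suc M \<le> i \<Longrightarrow> A i = 0"
  using hstrip_Suc_le by (metis Suc_le_D Suc_le_mono le_zero_eq)

lemma part_beyond_length: "length la \<le> i \<Longrightarrow> part la i = 0"
  unfolding part_def by simp

lemma part_Suc_le: "is_partition la \<Longrightarrow> part la (Suc i) \<le> part la i"
  unfolding is_partition_def part_def sorted_wrt_iff_nth_less by auto

lemma length_le_if_part_zero:
  "is_partition la \<Longrightarrow> (\<And>i. M \<le> i \<Longrightarrow> part la i = 0) \<Longrightarrow> length la \<le> M"
  unfolding is_partition_def part_def by (metis not_le nth_mem less_irrefl)

lemma part_inj:
  assumes "is_partition la" "is_partition mu" "part la = part mu"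
  shows "la = mu"
proof -
  have "length la = length mu"
    using length_le_if_part_zero[OF assms(1), of "length mu"]
      length_le_if_part_zero[OF assms(2), of "length la"] part_beyond_length assms(3)
    by (metis le_antisym)
  then show ?thesis using assms(3) by (metis nth_equalityI part_def)
qed

lemma part_surj:
  assumes "antimono f" and zero: "\<And>i. M \<le> i \<Longrightarrow> f i = (0::nat)"
  shows "\<exists>la. is_partition la \<and> part la = f"
proof -
  define K where "K = (LEAST k. f k = 0)"
  have "f K = 0" unfolding K_def by (rule LeastI[of _ M]) (simp add: zero)
  then have zero_K: "\<And>i. K \<le> i \<Longrightarrow> f i = 0"
    using \<open>antimono f\<close> by (metis antimonoD le_zero_eq)
  have "\<And>i. i < K \<Longrightarrow> 0 < f i" unfolding K_def using not_less_Least by blast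
  then have "is_partition (map f [0..<K])"
    using \<open>antimono f\<close> unfolding is_partition_def sorted_wrt_iff_nth_less
    by (auto simp: in_set_conv_nth antimonoD)
  moreover have "part (map f [0..<K]) = f"
    using zero_K unfolding part_def by (auto simp: not_less)
  ultimately show ?thesis by blast
qed

lemma size_part_eq_sum: "length la \<le> M \<Longrightarrow> size_part la = sum (part la) {..<M}"
proof -
  assume "length la \<le> M"
  have "size_part la = sum (part la) {..<length la}"
    unfolding size_part_def sum_list_sum_nth atLeast0LessThan by (rule sum.cong) (auto simp: part_def)
  also have "\<dots> = sum (part la) {..<M}"
    using \<open>length la \<le> M\<close> by (intro sum.mono_neutral_left) (auto simp: part_def)
  finally show ?thesis .
qed

lemma contained_if_hstrip: "hstrip (part la) (part mu) \<Longrightarrow> contained mu la"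
  unfolding contained_def by (blast intro: hstrip_le)

lemma horizontal_strip_iff_hstrip:
  assumes la: "is_partition la" and mu: "is_partition mu"
  shows "horizontal_strip la mu \<longleftrightarrow> hstrip (part la) (part mu)"
proof
  assume strip: "horizontal_strip la mu"
  show "hstrip (part la) (part mu)" unfolding hstrip_def
  proof (intro allI conjI)
    fix i
    show "part mu i \<le> part la i" using strip unfolding horizontal_strip_def contained_def by auto
    show "part la (Suc i) \<le> part mu i"
    proof (rule ccontr)
      assume "\<not> part la (Suc i) \<le> part mu i"
      then have "(i, part la (Suc i)) \<in> skew_boxes la mu" "(Suc i, part la (Suc i)) \<in> skew_boxes la mu"
        using part_Suc_le[OF la, of i] part_Suc_le[OF mu, of i] unfolding skew_boxes_def by auto
      then have "i = Suc i" using strip unfolding horizontal_strip_def by blast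
      then show False by simp
    qed
  qed
next
  assume strip: "hstrip (part la) (part mu)"
  have "i = i'" if "(i, j) \<in> skew_boxes la mu" "(i', j) \<in> skew_boxes la mu" for i i' j
  proof (rule ccontr)
    have box_below: "False" if "(i, j) \<in> skew_boxes la mu" "(i', j) \<in> skew_boxes la mu" "i < i'"
      for i i'
      using that hstrip_Suc_le[OF strip, of i] hstrip_antimono_outer[OF strip, of "Suc i" i']
      unfolding skew_boxes_def by auto
    assume "i \<noteq> i'"
    then show False using box_below that by (metis linorder_neqE_nat)
  qed
  then show "horizontal_strip la mu"
    using contained_if_hstrip[OF strip] unfolding horizontal_strip_def by blast
qed

lemma spo_column_condition_iff:
  "(skew_boxes nu mum \<noteq> {} \<and> skew_boxes muo la \<noteq> {} \<longrightarrow>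
      (\<forall>b\<in>skew_boxes nu mum. \<forall>c\<in>skew_boxes muo la. snd c < snd b)) \<longleftrightarrow>
   (\<forall>a b. part la a < part muo a \<and> part mum b < part nu b \<longrightarrow> part muo a \<le> part mum b)"
proof
  assume "skew_boxes nu mum \<noteq> {} \<and> skew_boxes muo la \<noteq> {} \<longrightarrow>
      (\<forall>b\<in>skew_boxes nu mum. \<forall>c\<in>skew_boxes muo la. snd c < snd b)"
  moreover have "(a, part muo a) \<in> skew_boxes muo la" "(b, Suc (part mum b)) \<in> skew_boxes nu mum"
    if "part la a < part muo a" "part mum b < part nu b" for a b
    using that unfolding skew_boxes_def by auto
  ultimately show "\<forall>a b. part la a < part muo a \<and> part mum b < part nu b \<longrightarrow> part muo a \<le> part mum b"
    by (metis empty_iff less_Suc_eq_le snd_conv)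
next
  assume left: "\<forall>a b. part la a < part muo a \<and> part mum b < part nu b \<longrightarrow> part muo a \<le> part mum b"
  show "skew_boxes nu mum \<noteq> {} \<and> skew_boxes muo la \<noteq> {} \<longrightarrow>
      (\<forall>b\<in>skew_boxes nu mum. \<forall>c\<in>skew_boxes muo la. snd c < snd b)"
  proof (intro impI ballI)
    fix b c assume "b \<in> skew_boxes nu mum" "c \<in> skew_boxes muo la"
    moreover obtain b1 b2 c1 c2 where "b = (b1, b2)" "c = (c1, c2)" by fastforce
    ultimately show "snd c < snd b" using left[rule_format, of c1 b1] unfolding skew_boxes_def by auto
  qed
qed

lemma bij_betw_part:
  assumes S: "\<And>mu. mu \<in> S \<longleftrightarrow> is_partition mu \<and> part mu \<in> T"
    and T: "\<And>f. f \<in> T \<Longrightarrow> \<exists>mu. is_partition mu \<and> part mu = f"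
  shows "bij_betw part S T"
proof (rule bij_betw_imageI)
  show "inj_on part S" using S part_inj by (meson inj_onI)
  show "part ` S = T"
  proof
    show "part ` S \<subseteq> T" using S by blast
    show "T \<subseteq> part ` S" using S T by (metis image_eqI subsetI)
  qed
qed

lemma bij_betw_map_prod_part:
  assumes S: "\<And>x y. (x, y) \<in> S \<longleftrightarrow> is_partition x \<and> is_partition y \<and> (part x, part y) \<in> T"
    and T: "\<And>X Y. (X, Y) \<in> T \<Longrightarrow> \<exists>x y. is_partition x \<and> is_partition y \<and> part x = X \<and> part y = Y"
  shows "bij_betw (map_prod part part) S T"
proof (rule bij_betw_imageI)
  show "inj_on (map_prod part part) S"
    using S part_inj by (intro inj_onI) (metis map_prod_simp prod.collapse prod.inject)
  show "map_prod part part ` S = T"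
  proof
    show "map_prod part part ` S \<subseteq> T" using S by auto
    show "T \<subseteq> map_prod part part ` S"
    proof
      fix p assume "p \<in> T"
      then obtain x y where "is_partition x" "is_partition y" "p = (part x, part y)"
        using T by (metis prod.collapse)
      then show "p \<in> map_prod part part ` S" using S \<open>p \<in> T\<close> by force
    qed
  qed
qed

locale partition_pair =
  fixes la nu :: "nat list"
  assumes la: "is_partition la" and nu: "is_partition nu"

sublocale partition_pair \<subseteq> row_bumping "part la" "part nu" "Suc (length la + length nu)"
proof
  show "\<And>i. part la (Suc i) \<le> part la i" using la by (rule part_Suc_le)
qed (auto simp: part_def)

context partition_pair
begin

lemma size_part_eq_sz:
  "is_partition x \<Longrightarrow> (\<And>i. Suc (length la) \<le> i \<Longrightarrow> part x i = 0) \<Longrightarrow> size_part x = sz (part x)"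
  unfolding sz_def by (rule size_part_eq_sum) (use length_le_if_part_zero in fastforce)

lemma size_part_la: "size_part la = sz (part la)"
  unfolding sz_def by (rule size_part_eq_sum) simp

lemma size_part_nu: "size_part nu = sz (part nu)"
  unfolding sz_def by (rule size_part_eq_sum) simp

lemma sp_bumping_iff_sp_rows:
  "sp_bumping la mu nu \<and> skew_size la mu = l \<and> skew_size nu mu = n \<longleftrightarrow>
   is_partition mu \<and> part mu \<in> sp_rows l n"
proof (cases "is_partition mu \<and> hstrip (part la) (part mu) \<and> hstrip (part nu) (part mu)")
  case True
  then have "size_part mu = sz (part mu)"
    using hstrip_zero_inner[of "part la" "part mu" "length la"] part_beyond_length
    by (intro size_part_eq_sz) auto
  moreover have "sz (part mu) \<le> sz (part la)" "sz (part mu) \<le> sz (part nu)"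
    using True by (auto intro: sz_mono hstrip_le)
  ultimately show ?thesis
    using True la nu contained_if_hstrip horizontal_strip_iff_hstrip
    unfolding sp_bumping_def sp_rows_def skew_size_def size_part_la size_part_nu by auto
next
  case False
  then show ?thesis
    using la nu horizontal_strip_iff_hstrip unfolding sp_bumping_def sp_rows_def by auto
qed

lemma spo_bumping_iff_spo_rows:
  "spo_bumping la x y nu \<and> skew_size x la = m1 \<and> skew_size x y = l \<and> skew_size nu y = m2 \<longleftrightarrow>
   is_partition x \<and> is_partition y \<and> (part x, part y) \<in> spo_rows l m1 m2"
proof (cases "is_partition x \<and> is_partition y \<and> hstrip (part x) (part la) \<and>
    hstrip (part x) (part y) \<and> hstrip (part nu) (part y)")
  case True
  then have x_zero: "\<And>i. Suc (length la) \<le> i \<Longrightarrow> part x i = 0"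
    using hstrip_zero_outer[of "part x" "part la" "length la"] part_beyond_length by auto
  then have "size_part x = sz (part x)" "size_part y = sz (part y)"
    using True hstrip_zero_inner[of "part x" "part y" "Suc (length la)"]
    by (auto intro: size_part_eq_sz)
  moreover have "sz (part la) \<le> sz (part x)" "sz (part y) \<le> sz (part x)" "sz (part y) \<le> sz (part nu)"
    using True by (auto intro: sz_mono hstrip_le)
  ultimately show ?thesis
    using True la nu contained_if_hstrip horizontal_strip_iff_hstrip spo_column_condition_iff
    unfolding spo_bumping_def spo_rows_def skew_size_def size_part_la size_part_nu by auto
next
  case False
  then show ?thesis
    using la nu horizontal_strip_iff_hstrip unfolding spo_bumping_def spo_rows_def by auto
qed

lemma sp_rows_are_parts:
  assumes "Y \<in> sp_rows l n"
  shows "\<exists>mu. is_partition mu \<and> part mu = Y"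
proof (rule part_surj)
  have strip: "hstrip (part la) Y" using assms unfolding sp_rows_def by blast
  then show "antimono Y" by (intro antimonoI) (rule hstrip_antimono_inner)
  show "\<And>i. length la \<le> i \<Longrightarrow> Y i = 0"
    using hstrip_zero_inner[OF strip] part_beyond_length by blast
qed

lemma spo_rows_are_parts:
  assumes "(X, Y) \<in> spo_rows l m1 m2"
  shows "\<exists>x y. is_partition x \<and> is_partition y \<and> part x = X \<and> part y = Y"
proof -
  note D = spo_rowsD[OF assms]
  have X_zero: "\<And>i. Suc (length la) \<le> i \<Longrightarrow> X i = 0"
    using hstrip_zero_outer[OF D(1)] part_beyond_length by blast
  then have "\<And>i. Suc (length la) \<le> i \<Longrightarrow> Y i = 0"
    using hstrip_zero_inner[OF D(2)] by blast
  moreover have "antimono X" "antimono Y"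
    using hstrip_antimono_outer[OF D(2)] hstrip_antimono_inner[OF D(2)] by (auto intro: antimonoI)
  ultimately show ?thesis using X_zero part_surj[of X] part_surj[of Y] by metis
qed

end

theorem mainTheorem9:
  fixes la nu :: "nat list" and k l m1 :: nat
  assumes "is_partition la" and "is_partition nu" and "l + m1 \<le> k"
  shows "\<exists>f. bij_betw f
     {mu. sp_bumping la mu nu \<and> skew_size la mu = l \<and> skew_size nu mu = k - l}
     {(muo, mum). spo_bumping la muo mum nu \<and> skew_size muo la = m1 \<and>
        skew_size muo mum = l \<and> skew_size nu mum = k - l - m1}"
proof -
  interpret partition_pair la nu using assms(1,2) by unfold_locales
  have "k - l = m1 + (k - l - m1)" using assms(3) by simp
  then obtain g where g: "bij_betw g (sp_rows l (k - l)) (spo_rows l m1 (k - l - m1))"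
    using sp_rows_bij_spo_rows by metis
  have "bij_betw part {mu. sp_bumping la mu nu \<and> skew_size la mu = l \<and> skew_size nu mu = k - l}
      (sp_rows l (k - l))"
    using sp_bumping_iff_sp_rows sp_rows_are_parts by (intro bij_betw_part) auto
  moreover have "bij_betw (map_prod part part) {(muo, mum). spo_bumping la muo mum nu \<and>
      skew_size muo la = m1 \<and> skew_size muo mum = l \<and> skew_size nu mum = k - l - m1}
      (spo_rows l m1 (k - l - m1))"
    using spo_bumping_iff_spo_rows spo_rows_are_parts by (intro bij_betw_map_prod_part) auto
  ultimately show ?thesis
    using g by (meson bij_betw_inv bij_betw_trans)
qed

end
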